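(* Let $\pi_1,\pi_2,\pi_3,\pi_4$ be permutations of $[8]=\{1,\dots,8\}$. Call a permutation $\sigma$ of $[8]$ bad if there is no permutation $\tau$ of $[8]$ that is simultaneously a derangement of each of $\pi_1,\pi_2,\pi_3,\pi_4,\sigma$. Then there are at most $96$ bad permutations. Moreover, if there are more than $24$ bad permutations, then there exist a permutation $\sigma_0$ of $[8]$ and a set $I\subseteq[8]$ with $|I|=5$ such that every bad permutation $\tau$ satisfies $\tau(i)=\sigma_0(i)$ for at least four elements $i\in I$.
   Context: A permutation $\tau$ of $[k]$ is a derangement of a permutation $\pi$ of $[k]$ if $\tau(i)\neq\pi(i)$ for every $i\in[k]$. *)

theory Defs
  imports "HOL-Combinatorics.Permutations"
begin

definition is_derangement_of :: "nat \<Rightarrow> (nat \<Rightarrow> nat) \<Rightarrow> (nat \<Rightarrow> nat) \<Rightarrow> bool" where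
  "is_derangement_of k \<tau> \<pi> \<longleftrightarrow> (\<forall>i\<in>{1..k}. \<tau> i \<noteq> \<pi> i)"

definition bad_perm :: "(nat \<Rightarrow> nat) \<Rightarrow> (nat \<Rightarrow> nat) \<Rightarrow> (nat \<Rightarrow> nat) \<Rightarrow> (nat \<Rightarrow> nat) \<Rightarrow> (nat \<Rightarrow> nat) \<Rightarrow> bool" where
  "bad_perm \<pi>1 \<pi>2 \<pi>3 \<pi>4 \<sigma> \<longleftrightarrow> \<sigma> permutes {1..8} \<and>
     \<not> (\<exists>\<tau>. \<tau> permutes {1..8} \<and> is_derangement_of 8 \<tau> \<pi>1 \<and> is_derangement_of 8 \<tau> \<pi>2
          \<and> is_derangement_of 8 \<tau> \<pi>3 \<and> is_derangement_of 8 \<tau> \<pi>4 \<and> is_derangement_of 8 \<tau> \<sigma>)"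

end

theory Submission
  imports Defs
begin

text \<open>
  Mark the cells (i, \<pi>k i) of the 8 \<times> 8 board as forbidden; every row and every column then
  contains at most four forbidden cells. By the Frobenius--Koenig theorem (Hall's marriage
  theorem), \<sigma> is bad iff some rectangle with r + c = 9 consists of forbidden cells and cells
  of the graph of \<sigma>; the bound four per line forces a 4 \<times> 5 or a 5 \<times> 4 rectangle in which
  every row (column) has exactly one cell on the graph of \<sigma>. Two such rectangles of the same
  shape share their long side, and the rows of a 4 \<times> 5 one lie among those of every 5 \<times> 4
  one, so all rows involved lie in one 5-set I, and every bad \<sigma> agrees on four points of I
  with a single \<sigma>0. At most 3! + 5 (4! - 3!) = 96 permutations do so.
\<close>

definition hall_condition :: "('a \<Rightarrow> 'b set) \<Rightarrow> 'a set \<Rightarrow> bool" where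
  "hall_condition F I \<longleftrightarrow> (\<forall>J\<subseteq>I. card J \<le> card (\<Union>(F ` J)))"

lemma hall_conditionD: "hall_condition F I \<Longrightarrow> J \<subseteq> I \<Longrightarrow> card J \<le> card (\<Union>(F ` J))"
  unfolding hall_condition_def by blast

lemma hall_condition_subset: "hall_condition F I \<Longrightarrow> J \<subseteq> I \<Longrightarrow> hall_condition F J"
  unfolding hall_condition_def by blast

lemma inj_on_if_glue:
  assumes "inj_on f J" and "inj_on g K" and "\<forall>i\<in>K. g i \<notin> f ` J"
  shows "inj_on (\<lambda>i. if i \<in> J then f i else g i) (J \<union> K)"
  using assms by (auto simp: inj_on_def image_iff) (metis)+

lemma hall_condition_remove_critical:
  assumes "finite I" and "\<forall>i\<in>I. finite (F i)" and "hall_condition F I"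
    and "J \<subseteq> I" and "card (\<Union>(F ` J)) = card J"
  shows "hall_condition (\<lambda>i. F i - \<Union>(F ` J)) (I - J)"
  unfolding hall_condition_def
proof (intro allI impI)
  fix K assume K: "K \<subseteq> I - J"
  have fin: "finite K" "finite J" using K assms(1,4) finite_subset by blast+
  have "card K + card J = card (K \<union> J)" using K fin by (subst card_Un_disjoint) auto
  also have "\<dots> \<le> card (\<Union>(F ` (K \<union> J)))"
    using K assms(4) by (intro hall_conditionD[OF assms(3)]) auto
  also have "\<dots> = card (\<Union>(F ` (K \<union> J)) - \<Union>(F ` J)) + card (\<Union>(F ` J))"
  proof -
    have "finite (\<Union>(F ` (K \<union> J)))" using fin assms(2,4) K by (auto intro!: finite_UN_I)
    then show ?thesis by (simp add: card_Diff_subset card_mono)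
  qed
  also have "\<Union>(F ` (K \<union> J)) - \<Union>(F ` J) = \<Union>((\<lambda>i. F i - \<Union>(F ` J)) ` K)" by blast
  finally show "card K \<le> card (\<Union>((\<lambda>i. F i - \<Union>(F ` J)) ` K))"
    using assms(5) by linarith
qed

lemma hall_condition_remove_point:
  assumes "finite I" and "\<forall>i\<in>I. finite (F i)" and hall: "hall_condition F I"
    and no_critical: "\<not> (\<exists>J\<subseteq>I. J \<noteq> {} \<and> J \<noteq> I \<and> card (\<Union>(F ` J)) = card J)"
    and "i0 \<in> I"
  shows "hall_condition (\<lambda>i. F i - {y}) (I - {i0})"
  unfolding hall_condition_def
proof (intro allI impI)
  fix K assume K: "K \<subseteq> I - {i0}"
  show "card K \<le> card (\<Union>((\<lambda>i. F i - {y}) ` K))"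
  proof (cases "K = {}")
    case False
    then have "card (\<Union>(F ` K)) \<noteq> card K" using no_critical K assms(5) by auto
    moreover have "card K \<le> card (\<Union>(F ` K))" using K by (intro hall_conditionD[OF hall]) auto
    moreover have "finite (\<Union>(F ` K))" using K assms(1,2) finite_subset by blast
    moreover have "\<Union>((\<lambda>i. F i - {y}) ` K) = \<Union>(F ` K) - {y}" by blast
    ultimately show ?thesis by (simp add: card_Diff_singleton_if) linarith
  qed simp
qed

theorem marriage_theorem:
  assumes "finite I" and "\<forall>i\<in>I. finite (F i)" and "hall_condition F I"
  shows "\<exists>f. inj_on f I \<and> (\<forall>i\<in>I. f i \<in> F i)"
  using assms
proof (induction "card I" arbitrary: I F rule: less_induct)
  case less
  note fin = less.prems(1,2) and hall = less.prems(3)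
  have IH: "\<exists>f. inj_on f I' \<and> (\<forall>i\<in>I'. f i \<in> F' i)"
    if "card I' < card I" "finite I'" "\<forall>i\<in>I'. finite (F' i)" "hall_condition F' I'"
    for I' :: "'a set" and F' :: "'a \<Rightarrow> 'b set"
    by (rule less.hyps[OF that])
  show ?case
  proof (cases "\<exists>J\<subseteq>I. J \<noteq> {} \<and> J \<noteq> I \<and> card (\<Union>(F ` J)) = card J")
    case True
    then obtain J where J: "J \<subseteq> I" "J \<noteq> {}" "J \<noteq> I" and critical: "card (\<Union>(F ` J)) = card J"
      by auto
    have finJ: "finite J" using J(1) fin(1) finite_subset by blast
    have lt: "card J < card I" "card (I - J) < card I"
      using J finJ fin(1) psubset_card_mono[of I J] card_mono[OF fin(1) J(1)] card_gt_0_iff[of J]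
      by (auto simp: card_Diff_subset)
    have "\<forall>i\<in>J. finite (F i)" "\<forall>i\<in>I - J. finite (F i - \<Union>(F ` J))" using fin J(1) by auto
    then obtain f g where f: "inj_on f J" "\<forall>i\<in>J. f i \<in> F i"
      and g: "inj_on g (I - J)" "\<forall>i\<in>I - J. g i \<in> F i - \<Union>(F ` J)"
      using IH[OF lt(1) finJ _ hall_condition_subset[OF hall J(1)]]
        IH[OF lt(2) _ _ hall_condition_remove_critical[OF fin hall J(1) critical]] fin(1)
      by blast
    have "f ` J \<subseteq> \<Union>(F ` J)" using f(2) by blast
    then have "inj_on (\<lambda>i. if i \<in> J then f i else g i) (J \<union> (I - J))"
      using f(1) g by (intro inj_on_if_glue) auto
    moreover have "J \<union> (I - J) = I" using J(1) by blast
    ultimately show ?thesis using f g by (intro exI[of _ "\<lambda>i. if i \<in> J then f i else g i"]) auto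
  next
    case no_critical: False
    show ?thesis
    proof (cases "I = {}")
      case False
      then obtain i0 where i0: "i0 \<in> I" by blast
      have "card {i0} \<le> card (\<Union>(F ` {i0}))" using hall_conditionD[OF hall, of "{i0}"] i0 by simp
      then have "F i0 \<noteq> {}" by auto
      then obtain y where y: "y \<in> F i0" by blast
      have "\<forall>i\<in>I - {i0}. finite (F i - {y})" using fin by auto
      then obtain g where g: "inj_on g (I - {i0})" "\<forall>i\<in>I - {i0}. g i \<in> F i - {y}"
        using IH[OF card_Diff1_less[OF fin(1) i0] _ _
          hall_condition_remove_point[OF fin hall no_critical i0]] fin(1)
        by blast
      have "inj_on (\<lambda>i. if i \<in> {i0} then y else g i) ({i0} \<union> (I - {i0}))"
        using g by (intro inj_on_if_glue) auto
      moreover have "{i0} \<union> (I - {i0}) = I" using i0 by blast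
      ultimately show ?thesis using g y by (intro exI[of _ "\<lambda>i. if i \<in> {i0} then y else g i"]) auto
    qed auto
  qed
qed

lemma frobenius_koenig:
  assumes "finite A" and no_perm: "\<forall>\<tau>. \<tau> permutes A \<longrightarrow> (\<exists>i\<in>A. Q i (\<tau> i))"
  shows "\<exists>R C. R \<subseteq> A \<and> C \<subseteq> A \<and> card A < card R + card C \<and> (\<forall>r\<in>R. \<forall>c\<in>C. Q r c)"
proof -
  define F where "F i = {c\<in>A. \<not> Q i c}" for i
  have "\<not> hall_condition F A"
  proof
    assume "hall_condition F A"
    then obtain f where f: "inj_on f A" "\<forall>i\<in>A. f i \<in> F i"
      using marriage_theorem[of A F] assms(1) unfolding F_def by auto
    define \<tau> where "\<tau> i = (if i \<in> A then f i else i)" for i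
    have "inj_on \<tau> A" using f(1) by (simp add: \<tau>_def inj_on_def)
    moreover have "\<tau> ` A \<subseteq> A" using f(2) by (auto simp: \<tau>_def F_def)
    ultimately have "bij_betw \<tau> A A" using endo_inj_surj[OF assms(1)] by (simp add: bij_betw_def)
    then have "\<tau> permutes A" by (rule bij_imp_permutes) (simp add: \<tau>_def)
    moreover have "\<not> Q i (\<tau> i)" if "i \<in> A" for i using f(2) that by (simp add: \<tau>_def F_def)
    ultimately show False using no_perm by blast
  qed
  then obtain R where R: "R \<subseteq> A" and deficient: "card (\<Union>(F ` R)) < card R"
    unfolding hall_condition_def by (meson not_le)
  define C where "C = A - \<Union>(F ` R)"
  have "card C = card A - card (\<Union>(F ` R))"
    unfolding C_def using assms(1)
      by (intro card_Diff_subset) (auto simp: F_def intro: finite_subset)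
  moreover have "card R \<le> card A" using R assms(1) by (rule card_mono[rotated])
  ultimately have "card A < card R + card C" using deficient by linarith
  moreover have "Q r c" if "r \<in> R" "c \<in> C" for r c using that by (auto simp: C_def F_def)
  ultimately show ?thesis using R by (intro exI[of _ R] exI[of _ C]) (auto simp: C_def)
qed

lemma permutes_fixing: "\<rho> permutes A \<Longrightarrow> \<forall>x\<in>T. \<rho> x = x \<Longrightarrow> \<rho> permutes (A - T)"
  unfolding permutes_def by auto

lemma permutes_fixing_all_but_one:
  assumes "\<rho> permutes A" and "finite I" and "card I = Suc k" and "k \<le> card {i\<in>I. \<rho> i = i}"
  shows "\<rho> permutes (A - I) \<or> (\<exists>i\<in>I. \<rho> i \<noteq> i \<and> \<rho> permutes insert i (A - I))"
proof (cases "\<forall>i\<in>I. \<rho> i = i")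
  case False
  then obtain i where i: "i \<in> I" "\<rho> i \<noteq> i" by blast
  have sub: "{i\<in>I. \<rho> i = i} \<subseteq> I - {i}" using i by auto
  have fin: "finite (I - {i})" and "card (I - {i}) = k" using assms(2,3) i by simp_all
  then have "card {i\<in>I. \<rho> i = i} = card (I - {i})" using assms(4) card_mono[OF fin sub] by simp
  then have "{i\<in>I. \<rho> i = i} = I - {i}" by (rule card_subset_eq[OF fin sub])
  then have "\<rho> permutes (A - (I - {i}))" using assms(1) by (intro permutes_fixing) auto
  then have "\<rho> permutes insert i (A - I)" by (rule permutes_subset) blast
  then show ?thesis using i by blast
qed (use assms(1) permutes_fixing in blast)

lemma card_permutes_fixing_all_but_one:
  assumes "finite A" and "I \<subseteq> A" and "card I = Suc k"
  defines "m \<equiv> card (A - I)"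
  shows "card {\<rho>. \<rho> permutes A \<and> k \<le> card {i\<in>I. \<rho> i = i}} \<le> fact m + Suc k * (fact (Suc m) - fact m)"
proof -
  define Rest where "Rest = A - I"
  define P0 where "P0 = {\<rho>. \<rho> permutes Rest}"
  define P where "P i = {\<rho>. \<rho> permutes (insert i Rest)}" for i
  have finRest: "finite Rest" and finI: "finite I"
    using assms(1,2) finite_subset by (auto simp: Rest_def)
  have card_P0: "card P0 = fact m"
    using card_permutations[OF _ finRest] by (simp add: P0_def Rest_def m_def)
  have card_P: "card (P i - P0) = fact (Suc m) - fact m" if "i \<in> I" for i
  proof -
    have "i \<notin> Rest" using that by (simp add: Rest_def)
    then have "card (P i) = fact (Suc m)"
      using card_permutations[of "insert i Rest"] finRest by (simp add: P_def Rest_def m_def)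
    moreover have "P0 \<subseteq> P i" unfolding P0_def P_def using permutes_subset by blast
    ultimately show ?thesis using card_P0 finite_permutations[OF finRest]
      by (simp add: card_Diff_subset P0_def)
  qed
  have cover: "{\<rho>. \<rho> permutes A \<and> k \<le> card {i\<in>I. \<rho> i = i}} \<subseteq> P0 \<union> (\<Union>i\<in>I. P i - P0)"
  proof
    fix \<rho> assume "\<rho> \<in> {\<rho>. \<rho> permutes A \<and> k \<le> card {i\<in>I. \<rho> i = i}}"
    then have "\<rho> permutes Rest \<or> (\<exists>i\<in>I. \<rho> i \<noteq> i \<and> \<rho> permutes insert i Rest)"
      using permutes_fixing_all_but_one[OF _ finI assms(3)] by (simp add: Rest_def)
    moreover have "\<rho> \<notin> P0" if "i \<in> I" "\<rho> i \<noteq> i" for i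
      using that permutes_not_in[of \<rho> Rest i] by (auto simp: P0_def Rest_def)
    ultimately show "\<rho> \<in> P0 \<union> (\<Union>i\<in>I. P i - P0)" unfolding P0_def P_def by blast
  qed
  have "finite (P0 \<union> (\<Union>i\<in>I. P i - P0))"
    using finI finRest by (simp add: P0_def P_def finite_permutations)
  then have "card {\<rho>. \<rho> permutes A \<and> k \<le> card {i\<in>I. \<rho> i = i}} \<le> card (P0 \<union> (\<Union>i\<in>I. P i - P0))"
    using cover by (rule card_mono)
  also have "\<dots> \<le> card P0 + card (\<Union>i\<in>I. P i - P0)" by (rule card_Un_le)
  also have "\<dots> \<le> card P0 + (\<Sum>i\<in>I. card (P i - P0))" by (intro add_left_mono card_UN_le[OF finI])
  also have "\<dots> = fact m + Suc k * (fact (Suc m) - fact m)" using card_P0 card_P assms(3) by simp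
  finally show ?thesis .
qed

lemma card_permutes_agreeing_all_but_one:
  assumes "finite A" and "I \<subseteq> A" and "card I = Suc k" and "\<sigma>0 permutes A"
  shows "card {\<sigma>. \<sigma> permutes A \<and> k \<le> card {i\<in>I. \<sigma> i = \<sigma>0 i}}
    \<le> fact (card (A - I)) + Suc k * (fact (Suc (card (A - I))) - fact (card (A - I)))"
proof -
  let ?Q = "{\<rho>. \<rho> permutes A \<and> k \<le> card {i\<in>I. \<rho> i = i}}"
  have "{\<sigma>. \<sigma> permutes A \<and> k \<le> card {i\<in>I. \<sigma> i = \<sigma>0 i}} \<subseteq> (\<lambda>\<rho>. \<sigma>0 \<circ> \<rho>) ` ?Q"
  proof safe
    fix \<sigma> assume \<sigma>: "\<sigma> permutes A" "k \<le> card {i\<in>I. \<sigma> i = \<sigma>0 i}"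
    have "{i\<in>I. (inv \<sigma>0 \<circ> \<sigma>) i = i} = {i\<in>I. \<sigma> i = \<sigma>0 i}"
      using permutes_inv_eq[OF assms(4)] by auto
    then have "inv \<sigma>0 \<circ> \<sigma> \<in> ?Q" using \<sigma> permutes_compose permutes_inv assms(4) by fastforce
    moreover have "\<sigma> = \<sigma>0 \<circ> (inv \<sigma>0 \<circ> \<sigma>)"
      using permutes_inverses(1)[OF assms(4)] by (simp add: fun_eq_iff)
    ultimately show "\<sigma> \<in> (\<lambda>\<rho>. \<sigma>0 \<circ> \<rho>) ` ?Q" by blast
  qed
  moreover have "finite ?Q" using finite_permutations[OF assms(1)] by simp
  ultimately have "card {\<sigma>. \<sigma> permutes A \<and> k \<le> card {i\<in>I. \<sigma> i = \<sigma>0 i}} \<le> card ((\<lambda>\<rho>. \<sigma>0 \<circ> \<rho>) ` ?Q)"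
    by (intro card_mono finite_imageI)
  also have "\<dots> \<le> card ?Q" using \<open>finite ?Q\<close> by (rule card_image_le)
  also have "\<dots> \<le> fact (card (A - I)) + Suc k * (fact (Suc (card (A - I))) - fact (card (A - I)))"
    using card_permutes_fixing_all_but_one[OF assms(1-3)] by simp
  finally show ?thesis .
qed

lemma card_agreement_inv:
  assumes "\<sigma> permutes A" and "\<rho> permutes A"
  shows "card {i\<in>\<rho> ` I. \<sigma> i = inv \<rho> i} = card {c\<in>I. inv \<sigma> c = \<rho> c}"
proof -
  have "{i\<in>\<rho> ` I. \<sigma> i = inv \<rho> i} = \<rho> ` {c\<in>I. inv \<sigma> c = \<rho> c}"
    using permutes_inv_eq[OF assms(1)] permutes_inverses[OF assms(2)] by auto
  then show ?thesis using permutes_inj[OF assms(2)] by (simp add: card_image inj_on_subset)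
qed

lemma card_insert_le_Suc: "card (insert x X) \<le> Suc (card X)"
  by (cases "finite X") (simp_all add: card_insert_if)

lemma Diff_singleton_eq_imp_Diff:
  assumes "a \<in> X" and "b \<in> Y" and eq: "X - {a} = Y - {b}" and "X \<noteq> Y"
  shows "Y - X = {b}"
proof -
  have "b \<notin> X"
  proof
    assume "b \<in> X"
    show False
    proof (cases "a = b")
      case True
      then have "X = Y" using assms(1,2) eq by (metis insert_Diff)
      then show False using assms(4) by contradiction
    next
      case False
      then show False using \<open>b \<in> X\<close> eq by blast
    qed
  qed
  then show ?thesis using assms(2) eq by blast
qed

text \<open>\<open>Z i c\<close>: the cell in row i and column c is forbidden.\<close>

locale board =
  fixes A :: "'a set" and Z :: "'a \<Rightarrow> 'a \<Rightarrow> bool"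
  assumes card_A: "card A = 8"
    and card_row_le: "i \<in> A \<Longrightarrow> card {c\<in>A. Z i c} \<le> 4"
    and card_col_le: "c \<in> A \<Longrightarrow> card {i\<in>A. Z i c} \<le> 4"
begin

lemma finite_A: "finite A"
  using card_A card.infinite by fastforce

lemma finite_subset_A: "X \<subseteq> A \<Longrightarrow> finite X"
  using finite_A finite_subset by blast

lemma board_transpose: "board A (\<lambda>i c. Z c i)"
  by unfold_locales (simp_all add: card_A card_row_le card_col_le)

lemma card_Int_lower:
  assumes "X \<subseteq> A" and "Y \<subseteq> A" shows "card X + card Y \<le> 8 + card (X \<inter> Y)"
proof -
  have "card (X \<union> Y) \<le> 8" using assms card_mono[OF finite_A, of "X \<union> Y"] card_A by simp
  then show ?thesis using card_Un_Int[OF finite_subset_A finite_subset_A, OF assms] by linarith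
qed

text \<open>No permutation avoiding both Z and \<sigma> can map a row of R into C.\<close>

definition blocks :: "('a \<Rightarrow> 'a) \<Rightarrow> 'a set \<Rightarrow> 'a set \<Rightarrow> bool" where
  "blocks \<sigma> R C \<longleftrightarrow> R \<subseteq> A \<and> C \<subseteq> A \<and> (\<forall>r\<in>R. \<forall>c\<in>C. Z r c \<or> \<sigma> r = c)"

abbreviation wide_block :: "('a \<Rightarrow> 'a) \<Rightarrow> 'a set \<Rightarrow> 'a set \<Rightarrow> bool" where
  "wide_block \<sigma> R C \<equiv> blocks \<sigma> R C \<and> card R = 4 \<and> card C = 5"

abbreviation tall_block :: "('a \<Rightarrow> 'a) \<Rightarrow> 'a set \<Rightarrow> 'a set \<Rightarrow> bool" where
  "tall_block \<sigma> R C \<equiv> blocks \<sigma> R C \<and> card R = 5 \<and> card C = 4"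

definition blocked_perms :: "('a \<Rightarrow> 'a) set" where
  "blocked_perms = {\<sigma>. \<sigma> permutes A \<and> (\<exists>R C. wide_block \<sigma> R C \<or> tall_block \<sigma> R C)}"

lemma blocks_mono: "blocks \<sigma> R C \<Longrightarrow> R' \<subseteq> R \<Longrightarrow> C' \<subseteq> C \<Longrightarrow> blocks \<sigma> R' C'"
  unfolding blocks_def by blast

lemma blocks_transpose:
  assumes "\<sigma> permutes A"
  shows "board.blocks A (\<lambda>i c. Z c i) (inv \<sigma>) C R \<longleftrightarrow> blocks \<sigma> R C"
proof -
  interpret T: board A "\<lambda>i c. Z c i" by (rule board_transpose)
  show ?thesis unfolding T.blocks_def blocks_def using permutes_inv_eq[OF assms] by auto
qed

lemma blocked_perms_transpose:
  assumes "\<sigma> \<in> blocked_perms" shows "inv \<sigma> \<in> board.blocked_perms A (\<lambda>i c. Z c i)"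
proof -
  interpret T: board A "\<lambda>i c. Z c i" by (rule board_transpose)
  obtain R C where \<sigma>: "\<sigma> permutes A" and "wide_block \<sigma> R C \<or> tall_block \<sigma> R C"
    using assms unfolding blocked_perms_def by auto
  then have "T.tall_block (inv \<sigma>) C R \<or> T.wide_block (inv \<sigma>) C R"
    using blocks_transpose[OF \<sigma>] by auto
  then show ?thesis unfolding T.blocked_perms_def using permutes_inv[OF \<sigma>] by auto
qed

lemma blocks_off_graph:
  assumes "\<sigma> permutes A" and "blocks \<sigma> R C" and "r \<in> R" and "c \<in> C" and "r \<noteq> inv \<sigma> c"
  shows "Z r c"
  using assms permutes_inverses(2)[OF assms(1)] unfolding blocks_def by metis

lemma row_of_wide_block:
  assumes "blocks \<sigma> R C" and "card C = 5" and "r \<in> R"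
  shows "\<sigma> r \<in> C \<and> {c\<in>A. Z r c} = C - {\<sigma> r}"
proof -
  have "r \<in> A" using assms(1,3) by (auto simp: blocks_def)
  then have fin: "finite {c\<in>A. Z r c}" and le4: "card {c\<in>A. Z r c} \<le> 4"
    using finite_A card_row_le by auto
  have sub: "C - {\<sigma> r} \<subseteq> {c\<in>A. Z r c}" using assms(1,3) by (auto simp: blocks_def)
  have "\<sigma> r \<in> C"
  proof (rule ccontr)
    assume "\<sigma> r \<notin> C"
    then have "card C \<le> card {c\<in>A. Z r c}" using sub fin by (simp add: card_mono)
    then show False using le4 assms(2) by simp
  qed
  moreover have "card (C - {\<sigma> r}) = 4" using calculation assms(2) by simp
  ultimately show ?thesis using card_subset_eq[OF fin sub] le4 card_mono[OF fin sub] by simp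
qed

lemma col_of_tall_block:
  assumes "\<sigma> permutes A" and "blocks \<sigma> R C" and "card R = 5" and "c \<in> C"
  shows "inv \<sigma> c \<in> R \<and> {i\<in>A. Z i c} = R - {inv \<sigma> c}"
proof -
  interpret T: board A "\<lambda>i c. Z c i" by (rule board_transpose)
  show ?thesis using T.row_of_wide_block[of "inv \<sigma>" C R c] assms blocks_transpose by simp
qed

lemma wide_blocks_same_columns:
  assumes \<sigma>: "\<sigma> permutes A" and \<sigma>': "\<sigma>' permutes A"
    and blk: "wide_block \<sigma> S U" and blk': "wide_block \<sigma>' S' U'"
  shows "U = U'"
proof (rule ccontr)
  assume "U \<noteq> U'"
  have sub: "S \<subseteq> A" "U \<subseteq> A" "S' \<subseteq> A" "U' \<subseteq> A" using blk blk' by (auto simp: blocks_def)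
  have fin: "finite S" "finite S'" using sub(1,3) by (simp_all add: finite_subset_A)
  have "U \<inter> U' \<noteq> {}" using card_Int_lower[OF sub(2,4)] blk blk' by auto
  then obtain u where u: "u \<in> U" "u \<in> U'" by blast
  let ?rest = "(S - {inv \<sigma> u}) \<union> (S' - {inv \<sigma>' u})"
  have "?rest \<subseteq> {i\<in>A. Z i u}"
    using blocks_off_graph[OF \<sigma>] blocks_off_graph[OF \<sigma>'] blk blk' u sub by blast
  then have "card ?rest \<le> card {i\<in>A. Z i u}" by (intro card_mono) (simp_all add: finite_A)
  also have "\<dots> \<le> 4" using u(1) sub(2) by (intro card_col_le) blast
  finally have "card ?rest \<le> 4" .
  have "card (S \<union> S') \<le> card (insert (inv \<sigma> u) (insert (inv \<sigma>' u) ?rest))"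
    using fin by (intro card_mono) auto
  also have "\<dots> \<le> card ?rest + 2" using fin by (auto simp: card_insert_if)
  finally have "card (S \<union> S') \<le> 6" using \<open>card ?rest \<le> 4\<close> by linarith
  then have "2 \<le> card (S \<inter> S')" using card_Un_Int[OF fin] blk blk' by linarith
  then have "\<not> (\<forall>t\<in>S \<inter> S'. \<forall>t'\<in>S \<inter> S'. t = t')"
    using card_le_Suc0_iff_eq[of "S \<inter> S'"] fin by auto
  then obtain t t' where t: "t \<in> S \<inter> S'" "t' \<in> S \<inter> S'" "t \<noteq> t'" by blast
  have diff: "U' - U = {\<sigma>' s}" if "s \<in> S \<inter> S'" for s
  proof -
    have "\<sigma> s \<in> U" "\<sigma>' s \<in> U'" "U - {\<sigma> s} = U' - {\<sigma>' s}"
      using row_of_wide_block[of \<sigma> S U s] row_of_wide_block[of \<sigma>' S' U' s] blk blk' that by auto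
    then show ?thesis using \<open>U \<noteq> U'\<close> by (intro Diff_singleton_eq_imp_Diff)
  qed
  have "\<sigma>' t = \<sigma>' t'" using diff[OF t(1)] diff[OF t(2)] by simp
  then show False using t(3) permutes_inj[OF \<sigma>'] by (meson injD)
qed

lemma tall_blocks_same_rows:
  assumes "\<sigma> permutes A" and "\<sigma>' permutes A"
    and "tall_block \<sigma> V K" and "tall_block \<sigma>' V' K'"
  shows "V = V'"
proof -
  interpret T: board A "\<lambda>i c. Z c i" by (rule board_transpose)
  show ?thesis
    using T.wide_blocks_same_columns[OF permutes_inv[OF assms(1)] permutes_inv[OF assms(2)]]
      assms blocks_transpose by blast
qed

context
  fixes \<sigma>1 \<sigma>2 S U V K
  assumes \<sigma>1: "\<sigma>1 permutes A" and \<sigma>2: "\<sigma>2 permutes A"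
    and wide: "wide_block \<sigma>1 S U" and tall: "tall_block \<sigma>2 V K"
begin

lemma wide_tall_subsets: "S \<subseteq> A" "U \<subseteq> A" "V \<subseteq> A" "K \<subseteq> A"
  using wide tall by (auto simp: blocks_def)

lemma wide_row_outside_tall:
  assumes "s \<in> S - V" shows "K \<inter> U \<subseteq> {\<sigma>1 s}"
proof
  fix c assume c: "c \<in> K \<inter> U"
  have "\<not> Z s c"
  proof
    assume "Z s c"
    then have "s \<in> {i\<in>A. Z i c}" using assms wide_tall_subsets by blast
    then show False using col_of_tall_block[OF \<sigma>2, of V K c] tall c assms by auto
  qed
  then show "c \<in> {\<sigma>1 s}" using wide assms c by (auto simp: blocks_def)
qed

lemma tall_col_outside_wide:
  assumes "c \<in> K - U" shows "S \<inter> V \<subseteq> {inv \<sigma>2 c}"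
proof
  fix s assume s: "s \<in> S \<inter> V"
  have "\<not> Z s c"
  proof
    assume "Z s c"
    then have "c \<in> {c\<in>A. Z s c}" using assms wide_tall_subsets by blast
    then show False using row_of_wide_block[of \<sigma>1 S U s] wide s assms by auto
  qed
  then show "s \<in> {inv \<sigma>2 c}" using blocks_off_graph[OF \<sigma>2] tall assms s by blast
qed

lemma wide_tall_blocks_nest: "S \<subseteq> V \<and> K \<subseteq> U"
proof -
  have "K \<inter> U \<noteq> {}" using card_Int_lower[OF wide_tall_subsets(4,2)] wide tall by auto
  then obtain d where d: "d \<in> K \<inter> U" by blast
  have "\<sigma>1 ` (S - V) \<subseteq> {d}" using wide_row_outside_tall d by blast
  then have "card (\<sigma>1 ` (S - V)) \<le> 1" using card_mono[of "{d}"] by simp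
  then have "card (S - V) \<le> 1"
    by (metis card_image inj_on_subset permutes_inj[OF \<sigma>1] subset_UNIV)
  then have "1 < card (S \<inter> V)"
    using card_Int_Diff[OF finite_subset_A[OF wide_tall_subsets(1)], of V] wide by linarith
  have "K \<subseteq> U"
  proof
    fix c assume "c \<in> K"
    show "c \<in> U"
    proof (rule ccontr)
      assume "c \<notin> U"
      then have "card (S \<inter> V) \<le> 1"
        using tall_col_outside_wide[of c] \<open>c \<in> K\<close> card_mono[of "{inv \<sigma>2 c}"] by simp
      then show False using \<open>1 < card (S \<inter> V)\<close> by simp
    qed
  qed
  have "S - V = {}"
  proof (rule ccontr)
    assume "S - V \<noteq> {}"
    then obtain s where "s \<in> S - V" by blast
    then have "card K \<le> 1"
      using wide_row_outside_tall[of s] \<open>K \<subseteq> U\<close> card_mono[of "{\<sigma>1 s}" K] by (simp add: Int_absorb2)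
    then show False using tall by simp
  qed
  then show ?thesis using \<open>K \<subseteq> U\<close> by blast
qed

end

lemma card_rows_of_blocks_le:
  assumes "\<sigma> permutes A" and "blocks \<sigma> R C" and "c \<in> C"
  shows "card R \<le> 5"
proof -
  have "R \<subseteq> insert (inv \<sigma> c) {i\<in>A. Z i c}"
    using blocks_off_graph[OF assms(1,2) _ assms(3)] assms(2) by (auto simp: blocks_def)
  then have "card R \<le> card (insert (inv \<sigma> c) {i\<in>A. Z i c})"
    by (intro card_mono) (simp_all add: finite_A)
  also have "\<dots> \<le> Suc (card {i\<in>A. Z i c})" by (rule card_insert_le_Suc)
  finally have "card R \<le> Suc (card {i\<in>A. Z i c})" .
  moreover have "card {i\<in>A. Z i c} \<le> 4" using card_col_le assms(2,3) by (auto simp: blocks_def)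
  ultimately show ?thesis by linarith
qed

lemma card_cols_of_blocks_le:
  assumes "blocks \<sigma> R C" and "r \<in> R"
  shows "card C \<le> 5"
proof -
  have "C \<subseteq> insert (\<sigma> r) {c\<in>A. Z r c}" using assms by (auto simp: blocks_def)
  then have "card C \<le> card (insert (\<sigma> r) {c\<in>A. Z r c})"
    by (intro card_mono) (simp_all add: finite_A)
  also have "\<dots> \<le> Suc (card {c\<in>A. Z r c})" by (rule card_insert_le_Suc)
  finally have "card C \<le> Suc (card {c\<in>A. Z r c})" .
  moreover have "card {c\<in>A. Z r c} \<le> 4" using card_row_le assms by (auto simp: blocks_def)
  ultimately show ?thesis by linarith
qed

lemma blocked_perm_if_no_avoiding_perm:
  assumes \<sigma>: "\<sigma> permutes A" and no_perm: "\<forall>\<tau>. \<tau> permutes A \<longrightarrow> (\<exists>i\<in>A. Z i (\<tau> i) \<or> \<tau> i = \<sigma> i)"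
  shows "\<sigma> \<in> blocked_perms"
proof -
  obtain R C where sub: "R \<subseteq> A" "C \<subseteq> A" and large: "8 < card R + card C"
    and "\<forall>r\<in>R. \<forall>c\<in>C. Z r c \<or> c = \<sigma> r"
    using frobenius_koenig[OF finite_A, of "\<lambda>i c. Z i c \<or> c = \<sigma> i"] no_perm card_A by auto
  then have blk: "blocks \<sigma> R C" by (auto simp: blocks_def)
  have "card R \<le> 8" "card C \<le> 8" using sub card_mono[OF finite_A] card_A by auto
  then have "R \<noteq> {}" "C \<noteq> {}" using large by auto
  then have le5: "card R \<le> 5" "card C \<le> 5"
    using card_rows_of_blocks_le[OF \<sigma> blk] card_cols_of_blocks_le[OF blk] by blast+
  show ?thesis
  proof (cases "card C = 5")
    case True
    then obtain R' where "R' \<subseteq> R" "card R' = 4"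
      using large le5 obtain_subset_with_card_n[of 4 R] by force
    then have "wide_block \<sigma> R' C" using blocks_mono[OF blk] True by blast
    then show ?thesis using \<sigma> unfolding blocked_perms_def by blast
  next
    case False
    then have "card R = 5" "4 \<le> card C" using large le5 by linarith+
    then obtain C' where "C' \<subseteq> C" "card C' = 4" using obtain_subset_with_card_n[of 4 C] by force
    then have "tall_block \<sigma> R C'" using blocks_mono[OF blk] \<open>card R = 5\<close> by blast
    then show ?thesis using \<sigma> unfolding blocked_perms_def by blast
  qed
qed

definition confines_block_rows :: "'a set \<Rightarrow> bool" where
  "confines_block_rows I \<longleftrightarrow>
    (\<forall>\<sigma> R C. \<sigma> permutes A \<longrightarrow> wide_block \<sigma> R C \<longrightarrow> R \<subseteq> I) \<and>
    (\<forall>\<sigma> R C. \<sigma> permutes A \<longrightarrow> tall_block \<sigma> R C \<longrightarrow> R = I)"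

context
  fixes \<sigma>1 S1 U
  assumes \<sigma>1: "\<sigma>1 permutes A" and wide1: "wide_block \<sigma>1 S1 U"
begin

lemma wide1_subset: "S1 \<subseteq> A" "U \<subseteq> A"
  using wide1 by (auto simp: blocks_def)

lemma row_wide1: "s \<in> S1 \<Longrightarrow> \<sigma>1 s \<in> U \<and> {c\<in>A. Z s c} = U - {\<sigma>1 s}"
  using row_of_wide_block wide1 by blast

lemma hole_wide1: "\<exists>u. U - \<sigma>1 ` S1 = {u}"
proof -
  have "\<sigma>1 ` S1 \<subseteq> U" using row_wide1 by blast
  moreover have "card (\<sigma>1 ` S1) = 4"
    using wide1 card_image[OF inj_on_subset[OF permutes_inj[OF \<sigma>1]]] by simp
  ultimately have "card (U - \<sigma>1 ` S1) = 1"
    using wide1 wide1_subset by (simp add: card_Diff_subset finite_subset_A)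
  then show ?thesis by (rule card_1_singletonE) blast
qed

lemma extra_row_at_hole:
  assumes x: "x \<in> A" "x \<notin> S1" and y: "y \<in> U" and row_x: "{c\<in>A. Z x c} = U - {y}"
  shows "y \<notin> \<sigma>1 ` S1"
proof
  assume "y \<in> \<sigma>1 ` S1"
  obtain u where u: "U - \<sigma>1 ` S1 = {u}" using hole_wide1 by blast
  then have "u \<in> U" "u \<noteq> y" using \<open>y \<in> \<sigma>1 ` S1\<close> by auto
  have "insert x S1 \<subseteq> {i\<in>A. Z i u}"
  proof
    fix t assume "t \<in> insert x S1"
    then show "t \<in> {i\<in>A. Z i u}"
    proof
      assume "t = x" then show ?thesis using row_x \<open>u \<in> U\<close> \<open>u \<noteq> y\<close> wide1_subset x by auto
    next
      assume "t \<in> S1"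
      then have "\<sigma>1 t \<noteq> u" using u by auto
      then show ?thesis using row_wide1[OF \<open>t \<in> S1\<close>] \<open>u \<in> U\<close> wide1_subset \<open>t \<in> S1\<close> by auto
    qed
  qed
  then have "card (insert x S1) \<le> card {i\<in>A. Z i u}" by (intro card_mono) (simp_all add: finite_A)
  also have "\<dots> \<le> 4" using card_col_le \<open>u \<in> U\<close> wide1_subset by blast
  finally show False using x wide1 finite_subset_A[OF wide1_subset(1)] by simp
qed

lemma extra_row_unique:
  assumes x: "x \<in> A" "x \<notin> S1" "y \<in> U" "{c\<in>A. Z x c} = U - {y}"
    and x': "x' \<in> A" "x' \<notin> S1" "y' \<in> U" "{c\<in>A. Z x' c} = U - {y'}"
  shows "x = x'"
proof (rule ccontr)
  assume "x \<noteq> x'"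
  obtain s where s: "s \<in> S1" using wide1 by fastforce
  let ?c = "\<sigma>1 s"
  have c: "?c \<in> U" "?c \<noteq> y" "?c \<noteq> y'"
    using row_wide1 s extra_row_at_hole[OF x] extra_row_at_hole[OF x'] by auto
  have "insert x (insert x' (S1 - {s})) \<subseteq> {i\<in>A. Z i ?c}"
  proof -
    have "Z t ?c" if "t \<in> S1 - {s}" for t
    proof -
      have "\<sigma>1 t \<noteq> ?c" using that s permutes_inj[OF \<sigma>1] by (metis DiffE injD singletonI)
      then show ?thesis using row_wide1[of t] that c wide1_subset by auto
    qed
    then show ?thesis using x x' c wide1_subset by auto
  qed
  then have "card (insert x (insert x' (S1 - {s}))) \<le> card {i\<in>A. Z i ?c}"
    by (intro card_mono) (simp_all add: finite_A)
  also have "\<dots> \<le> 4" using card_col_le c(1) wide1_subset by blast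
  finally show False using x x' \<open>x \<noteq> x'\<close> s wide1 finite_subset_A[OF wide1_subset(1)] by simp
qed

lemma confines_if_tall_block:
  assumes \<sigma>2: "\<sigma>2 permutes A" and tall2: "tall_block \<sigma>2 V K"
  shows "\<exists>x\<in>A - S1. confines_block_rows (insert x S1)"
proof -
  have "S1 \<subseteq> V" using wide_tall_blocks_nest[OF \<sigma>1 \<sigma>2 wide1 tall2] by blast
  moreover have "V \<subseteq> A" using tall2 by (simp add: blocks_def)
  ultimately have "card (V - S1) = 1"
    using tall2 wide1 finite_subset_A[OF wide1_subset(1)] by (simp add: card_Diff_subset)
  then obtain x where x: "V - S1 = {x}" by (rule card_1_singletonE)
  then have V: "V = insert x S1" using \<open>S1 \<subseteq> V\<close> by blast
  have "x \<in> A - S1" using x \<open>V \<subseteq> A\<close> by blast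
  moreover have "confines_block_rows V"
    unfolding confines_block_rows_def
    using wide_tall_blocks_nest[OF _ \<sigma>2 _ tall2] tall_blocks_same_rows[OF _ \<sigma>2 _ tall2] by blast
  ultimately show ?thesis using V by blast
qed

lemma confines_if_no_tall_block:
  assumes no_tall: "\<And>\<sigma> R C. \<sigma> permutes A \<Longrightarrow> \<not> tall_block \<sigma> R C"
  shows "\<exists>x\<in>A - S1. confines_block_rows (insert x S1)"
proof (cases "\<exists>\<sigma> R C. \<sigma> permutes A \<and> wide_block \<sigma> R C \<and> \<not> R \<subseteq> S1")
  case True
  then obtain \<sigma> R C x where \<sigma>: "\<sigma> permutes A" and wide: "wide_block \<sigma> R C" and x: "x \<in> R" "x \<notin> S1"
    by blast
  have "C = U" using wide_blocks_same_columns[OF \<sigma> \<sigma>1 wide wide1] .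
  then have row_x: "\<sigma> x \<in> U" "{c\<in>A. Z x c} = U - {\<sigma> x}" using row_of_wide_block wide x(1) by blast+
  have "x \<in> A" using wide x(1) by (auto simp: blocks_def)
  have "confines_block_rows (insert x S1)"
    unfolding confines_block_rows_def
  proof (intro conjI allI impI)
    fix \<tau> R' C' assume "\<tau> permutes A" "tall_block \<tau> R' C'"
    then show "R' = insert x S1" using no_tall by blast
  next
    fix \<tau> R' C' assume \<tau>: "\<tau> permutes A" and wide': "wide_block \<tau> R' C'"
    show "R' \<subseteq> insert x S1"
    proof
      fix t assume "t \<in> R'"
      have "C' = U" using wide_blocks_same_columns[OF \<tau> \<sigma>1 wide' wide1] .
      then have "\<tau> t \<in> U" "{c\<in>A. Z t c} = U - {\<tau> t}"
        using row_of_wide_block wide' \<open>t \<in> R'\<close> by blast+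
      moreover have "t \<in> A" using wide' \<open>t \<in> R'\<close> by (auto simp: blocks_def)
      ultimately show "t \<in> insert x S1"
        using extra_row_unique[of t "\<tau> t" x "\<sigma> x"] row_x \<open>x \<in> A\<close> x(2) by blast
    qed
  qed
  then show ?thesis using \<open>x \<in> A\<close> x(2) by blast
next
  case False
  have "\<not> A \<subseteq> S1" using card_mono[OF finite_subset_A[OF wide1_subset(1)], of A] card_A wide1 by auto
  then obtain x where "x \<in> A - S1" by blast
  then show ?thesis using False no_tall unfolding confines_block_rows_def by blast
qed

lemma confines_block_rows_extension: "\<exists>x\<in>A - S1. confines_block_rows (insert x S1)"
  using confines_if_tall_block confines_if_no_tall_block by blast

context
  fixes x u \<sigma>0
  assumes x: "x \<in> A - S1" and confines: "confines_block_rows (insert x S1)"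
    and hole: "U - \<sigma>1 ` S1 = {u}"
    and \<sigma>0_S1: "\<And>s. s \<in> S1 \<Longrightarrow> \<sigma>0 s = \<sigma>1 s" and \<sigma>0_x: "\<sigma>0 x = u"
begin

lemma wide_block_agrees:
  assumes \<sigma>: "\<sigma> permutes A" and wide: "wide_block \<sigma> S C"
  shows "4 \<le> card {i\<in>insert x S1. \<sigma> i = \<sigma>0 i}"
proof -
  have "C = U" using wide_blocks_same_columns[OF \<sigma> \<sigma>1 wide wide1] .
  have "S \<subseteq> insert x S1" using confines \<sigma> wide unfolding confines_block_rows_def by blast
  have "S \<subseteq> {i\<in>insert x S1. \<sigma> i = \<sigma>0 i}"
  proof
    fix t assume "t \<in> S"
    have row_t: "\<sigma> t \<in> U" "{c\<in>A. Z t c} = U - {\<sigma> t}"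
      using row_of_wide_block wide \<open>t \<in> S\<close> \<open>C = U\<close> by blast+
    have "\<sigma> t = \<sigma>0 t"
    proof (cases "t \<in> S1")
      case True
      then have "U - {\<sigma> t} = U - {\<sigma>1 t}" "\<sigma>1 t \<in> U" using row_wide1 row_t by auto
      then have "\<sigma> t = \<sigma>1 t" using row_t(1) by blast
      then show ?thesis using \<sigma>0_S1[OF True] by simp
    next
      case False
      then have "t = x" using \<open>S \<subseteq> insert x S1\<close> \<open>t \<in> S\<close> by blast
      then have "\<sigma> t \<notin> \<sigma>1 ` S1" using extra_row_at_hole[OF _ _ row_t] x by blast
      then have "\<sigma> t = u" using hole row_t(1) by blast
      then show ?thesis using \<open>t = x\<close> \<sigma>0_x by simp
    qed
    then show "t \<in> {i\<in>insert x S1. \<sigma> i = \<sigma>0 i}" using \<open>S \<subseteq> insert x S1\<close> \<open>t \<in> S\<close> by blast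
  qed
  then have "card S \<le> card {i\<in>insert x S1. \<sigma> i = \<sigma>0 i}"
    using finite_subset_A[OF wide1_subset(1)] by (intro card_mono) simp_all
  then show ?thesis using wide by simp
qed

lemma tall_block_agrees:
  assumes \<sigma>: "\<sigma> permutes A" and tall: "tall_block \<sigma> V K"
  shows "4 \<le> card {i\<in>insert x S1. \<sigma> i = \<sigma>0 i}"
proof -
  have V: "V = insert x S1" using confines \<sigma> tall unfolding confines_block_rows_def by blast
  have "K \<subseteq> U" using wide_tall_blocks_nest[OF \<sigma>1 \<sigma> wide1 tall] by blast
  have "inv \<sigma> ` K \<subseteq> {i\<in>V. \<sigma> i = \<sigma>0 i}"
  proof
    fix i assume "i \<in> inv \<sigma> ` K"
    then obtain c where c: "c \<in> K" and i: "i = inv \<sigma> c" by blast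
    have col_c: "i \<in> V" "{j\<in>A. Z j c} = V - {i}" using col_of_tall_block[OF \<sigma>] tall c i by blast+
    have "\<sigma> i = c" using i permutes_inverses(1)[OF \<sigma>] by simp
    have "c \<in> U" using \<open>K \<subseteq> U\<close> c by blast
    have "\<sigma>0 i = c"
    proof (cases "i \<in> S1")
      case True
      then have "\<not> Z i c" using col_c wide1_subset by blast
      then have "c = \<sigma>1 i" using row_wide1[OF True] \<open>c \<in> U\<close> wide1_subset by blast
      then show ?thesis using \<sigma>0_S1[OF True] by simp
    next
      case False
      then have "i = x" using col_c(1) V by blast
      have "c \<notin> \<sigma>1 ` S1"
      proof
        assume "c \<in> \<sigma>1 ` S1"
        then obtain s where s: "s \<in> S1" "c = \<sigma>1 s" by blast
        then have "Z s c" using col_c V \<open>i = x\<close> x wide1_subset by blast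
        then show False using row_wide1[OF s(1)] s(2) wide1_subset \<open>c \<in> U\<close> by blast
      qed
      then have "c = u" using hole \<open>c \<in> U\<close> by blast
      then show ?thesis using \<open>i = x\<close> \<sigma>0_x by simp
    qed
    then show "i \<in> {i\<in>V. \<sigma> i = \<sigma>0 i}" using col_c(1) \<open>\<sigma> i = c\<close> by simp
  qed
  then have "card (inv \<sigma> ` K) \<le> card {i\<in>insert x S1. \<sigma> i = \<sigma>0 i}"
    using V finite_subset_A[OF wide1_subset(1)] by (intro card_mono) simp_all
  moreover have "card (inv \<sigma> ` K) = 4"
    using tall card_image[OF inj_on_subset[OF permutes_inj[OF permutes_inv[OF \<sigma>]]]] by simp
  ultimately show ?thesis by simp
qed

end

lemma near_common_perm_of_wide_block:
  "\<exists>\<sigma>0 I. \<sigma>0 permutes A \<and> I \<subseteq> A \<and> card I = 5 \<and> (\<forall>\<sigma>\<in>blocked_perms. 4 \<le> card {i\<in>I. \<sigma> i = \<sigma>0 i})"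
proof -
  obtain x where x: "x \<in> A - S1" and confines: "confines_block_rows (insert x S1)"
    using confines_block_rows_extension by blast
  obtain u where hole: "U - \<sigma>1 ` S1 = {u}" using hole_wide1 by blast
  \<comment> \<open>\<sigma>0 agrees with \<sigma>1 on S1 and sends the extra row x to the column u that \<sigma>1 misses\<close>
  define w where "w = inv \<sigma>1 u"
  define \<sigma>0 where "\<sigma>0 = \<sigma>1 \<circ> transpose x w"
  have "u \<in> A" using hole wide1_subset by blast
  then have "w \<in> A" "\<sigma>1 w = u"
    using permutes_in_image[OF permutes_inv[OF \<sigma>1]] permutes_inverses(1)[OF \<sigma>1]
      by (auto simp: w_def)
  then have \<sigma>0: "\<sigma>0 permutes A" unfolding \<sigma>0_def
    using x by (intro permutes_compose[OF permutes_swap_id \<sigma>1]) auto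
  have \<sigma>0_x: "\<sigma>0 x = u" using \<open>\<sigma>1 w = u\<close> by (simp add: \<sigma>0_def)
  have \<sigma>0_S1: "\<sigma>0 s = \<sigma>1 s" if "s \<in> S1" for s
  proof -
    have "s \<noteq> x" "s \<noteq> w" using that x hole \<open>\<sigma>1 w = u\<close> by auto
    then show ?thesis by (simp add: \<sigma>0_def transpose_def)
  qed
  have "insert x S1 \<subseteq> A" "card (insert x S1) = 5"
    using x wide1 wide1_subset finite_subset_A[OF wide1_subset(1)] by auto
  moreover have "4 \<le> card {i\<in>insert x S1. \<sigma> i = \<sigma>0 i}" if "\<sigma> \<in> blocked_perms" for \<sigma>
    using that wide_block_agrees[OF x confines hole \<sigma>0_S1 \<sigma>0_x]
      tall_block_agrees[OF x confines hole \<sigma>0_S1 \<sigma>0_x]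
    unfolding blocked_perms_def by blast
  ultimately show ?thesis using \<sigma>0 by blast
qed

end

lemma blocked_perms_near_common_perm:
  assumes "blocked_perms \<noteq> {}"
  shows "\<exists>\<sigma>0 I. \<sigma>0 permutes A \<and> I \<subseteq> A \<and> card I = 5 \<and> (\<forall>\<sigma>\<in>blocked_perms. 4 \<le> card {i\<in>I. \<sigma> i = \<sigma>0 i})"
proof -
  interpret T: board A "\<lambda>i c. Z c i" by (rule board_transpose)
  obtain \<sigma>1 R C where \<sigma>1: "\<sigma>1 permutes A" and "wide_block \<sigma>1 R C \<or> tall_block \<sigma>1 R C"
    using assms unfolding blocked_perms_def by blast
  from this(2) show ?thesis
  proof
    assume "wide_block \<sigma>1 R C"
    then show ?thesis by (rule near_common_perm_of_wide_block[OF \<sigma>1])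
  next
    assume "tall_block \<sigma>1 R C"
    then have "T.wide_block (inv \<sigma>1) C R" using blocks_transpose[OF \<sigma>1] by simp
    then obtain \<rho> I where \<rho>: "\<rho> permutes A" and I: "I \<subseteq> A" "card I = 5"
      and agree: "\<forall>\<tau>\<in>T.blocked_perms. 4 \<le> card {c\<in>I. \<tau> c = \<rho> c}"
      using T.near_common_perm_of_wide_block[OF permutes_inv[OF \<sigma>1]] by blast
    have "inv \<rho> permutes A" "\<rho> ` I \<subseteq> A" "card (\<rho> ` I) = 5"
      using permutes_inv[OF \<rho>] I permutes_in_image[OF \<rho>]
        card_image[OF inj_on_subset[OF permutes_inj[OF \<rho>]]]
      by auto
    moreover have "4 \<le> card {i\<in>\<rho> ` I. \<sigma> i = inv \<rho> i}" if "\<sigma> \<in> blocked_perms" for \<sigma>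
      using agree blocked_perms_transpose[OF that] card_agreement_inv[OF _ \<rho>, of \<sigma> I] that
      unfolding blocked_perms_def by auto
    ultimately show ?thesis by blast
  qed
qed

lemma finite_blocked_perms: "finite blocked_perms"
  using finite_permutations[OF finite_A] unfolding blocked_perms_def
    by (rule finite_subset[rotated]) blast

lemma card_blocked_perms_le: "card blocked_perms \<le> 96"
proof (cases "blocked_perms = {}")
  case False
  then obtain \<sigma>0 I where \<sigma>0: "\<sigma>0 permutes A" and I: "I \<subseteq> A" "card I = 5"
    and agree: "\<forall>\<sigma>\<in>blocked_perms. 4 \<le> card {i\<in>I. \<sigma> i = \<sigma>0 i}"
    using blocked_perms_near_common_perm by blast
  have "card blocked_perms \<le> card {\<sigma>. \<sigma> permutes A \<and> 4 \<le> card {i\<in>I. \<sigma> i = \<sigma>0 i}}"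
    using agree finite_permutations[OF finite_A] unfolding blocked_perms_def
    by (intro card_mono) (auto intro: finite_subset)
  also have "\<dots> \<le> 96"
  proof -
    have "card (A - I) = 3" using I card_A finite_subset_A[OF I(1)] by (simp add: card_Diff_subset)
    then show ?thesis using card_permutes_agreeing_all_but_one[OF finite_A I(1) _ \<sigma>0, of 4] I
      by (simp add: fact_numeral)
  qed
  finally show ?thesis .
qed simp

end

lemma card_le_4_if_subset: "X \<subseteq> {a, b, c, d} \<Longrightarrow> card X \<le> 4"
  by (rule order_trans[OF card_mono]) (auto simp: card_insert_if)

lemma board_forbidden_positions:
  assumes "card A = 8"
    and "\<pi>1 permutes A" "\<pi>2 permutes A" "\<pi>3 permutes A" "\<pi>4 permutes A"
  shows "board A (\<lambda>i c. c = \<pi>1 i \<or> c = \<pi>2 i \<or> c = \<pi>3 i \<or> c = \<pi>4 i)"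
proof
  fix i c
  show "card {c\<in>A. c = \<pi>1 i \<or> c = \<pi>2 i \<or> c = \<pi>3 i \<or> c = \<pi>4 i} \<le> 4"
    by (rule card_le_4_if_subset) auto
  show "card {i\<in>A. c = \<pi>1 i \<or> c = \<pi>2 i \<or> c = \<pi>3 i \<or> c = \<pi>4 i} \<le> 4"
    using permutes_inverses(2)[OF assms(2)] permutes_inverses(2)[OF assms(3)]
      permutes_inverses(2)[OF assms(4)] permutes_inverses(2)[OF assms(5)]
    by (intro card_le_4_if_subset[of _ "inv \<pi>1 c" "inv \<pi>2 c" "inv \<pi>3 c" "inv \<pi>4 c"]) auto
qed (fact assms(1))

lemma bad_perm_blocked:
  assumes "bad_perm \<pi>1 \<pi>2 \<pi>3 \<pi>4 \<sigma>"
    and "board {1..8} (\<lambda>i c. c = \<pi>1 i \<or> c = \<pi>2 i \<or> c = \<pi>3 i \<or> c = \<pi>4 i)"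
  shows "\<sigma> \<in> board.blocked_perms {1..8} (\<lambda>i c. c = \<pi>1 i \<or> c = \<pi>2 i \<or> c = \<pi>3 i \<or> c = \<pi>4 i)"
proof -
  interpret board "{1..8}" "\<lambda>i c. c = \<pi>1 i \<or> c = \<pi>2 i \<or> c = \<pi>3 i \<or> c = \<pi>4 i" by (fact assms(2))
  have \<sigma>: "\<sigma> permutes {1..8}" and no_derangement: "\<And>\<tau>. \<tau> permutes {1..8} \<Longrightarrow>
      \<not> (is_derangement_of 8 \<tau> \<pi>1 \<and> is_derangement_of 8 \<tau> \<pi>2 \<and> is_derangement_of 8 \<tau> \<pi>3
        \<and> is_derangement_of 8 \<tau> \<pi>4 \<and> is_derangement_of 8 \<tau> \<sigma>)"
    using assms(1) unfolding bad_perm_def by auto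
  show ?thesis
  proof (rule blocked_perm_if_no_avoiding_perm[OF \<sigma>], intro allI impI)
    fix \<tau> :: "nat \<Rightarrow> nat" assume "\<tau> permutes {1..8}"
    then show "\<exists>i\<in>{1..8}. (\<tau> i = \<pi>1 i \<or> \<tau> i = \<pi>2 i \<or> \<tau> i = \<pi>3 i \<or> \<tau> i = \<pi>4 i) \<or> \<tau> i = \<sigma> i"
      using no_derangement[of \<tau>] unfolding is_derangement_of_def by auto
  qed
qed

theorem mainTheorem15:
  assumes "\<pi>1 permutes {1..8::nat}" and "\<pi>2 permutes {1..8::nat}"
    and "\<pi>3 permutes {1..8::nat}" and "\<pi>4 permutes {1..8::nat}"
  shows "card {\<sigma>. bad_perm \<pi>1 \<pi>2 \<pi>3 \<pi>4 \<sigma>} \<le> 96 \<and>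
    (card {\<sigma>. bad_perm \<pi>1 \<pi>2 \<pi>3 \<pi>4 \<sigma>} > 24 \<longrightarrow>
      (\<exists>\<sigma>0 I. \<sigma>0 permutes {1..8::nat} \<and> I \<subseteq> {1..8} \<and> card I = 5 \<and>
        (\<forall>\<tau>. bad_perm \<pi>1 \<pi>2 \<pi>3 \<pi>4 \<tau> \<longrightarrow> card {i\<in>I. \<tau> i = \<sigma>0 i} \<ge> 4)))"
proof -
  let ?Z = "\<lambda>i c. c = \<pi>1 i \<or> c = \<pi>2 i \<or> c = \<pi>3 i \<or> c = \<pi>4 i"
  have board: "board {1..8} ?Z" by (rule board_forbidden_positions[OF _ assms]) simp
  interpret board "{1..8}" ?Z by (fact board)
  have bad: "{\<sigma>. bad_perm \<pi>1 \<pi>2 \<pi>3 \<pi>4 \<sigma>} \<subseteq> blocked_perms" using bad_perm_blocked board by blast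
  have "card {\<sigma>. bad_perm \<pi>1 \<pi>2 \<pi>3 \<pi>4 \<sigma>} \<le> 96"
    using card_mono[OF finite_blocked_perms bad] card_blocked_perms_le by linarith
  \<comment> \<open>the structure holds as soon as there is a bad permutation at all\<close>
  moreover have "\<exists>\<sigma>0 I. \<sigma>0 permutes {1..8} \<and> I \<subseteq> {1..8} \<and> card I = 5 \<and>
      (\<forall>\<tau>. bad_perm \<pi>1 \<pi>2 \<pi>3 \<pi>4 \<tau> \<longrightarrow> card {i\<in>I. \<tau> i = \<sigma>0 i} \<ge> 4)"
    if "card {\<sigma>. bad_perm \<pi>1 \<pi>2 \<pi>3 \<pi>4 \<sigma>} > 24"
  proof -
    have "blocked_perms \<noteq> {}" using that bad by auto
    then show ?thesis using blocked_perms_near_common_perm bad by blast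
  qed
  ultimately show ?thesis by blast
qed

end
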